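(* Let $1\le m<n$, $\boldsymbol\xi=(\xi_1,\dots,\xi_{n-1})\in\mathbb Z_{\ge0}^{n-1}$ and $x,\Lambda_1,\dots,\Lambda_n\in\mathbb C$. (i) For any partition $\boldsymbol I=(I_{m+1},\dots,I_n)$ of $\{1,\dots,\xi_m\}$ with $\eta_s:=\eta_s(\boldsymbol I)\le\xi_s$ for $s=m+1,\dots,n-1$, and $\boldsymbol\eta=(\eta_{m+1},\dots,\eta_{n-1})$, $$\mathrm{Sym}_{\ddot{\boldsymbol t}}\Big[U_{\boldsymbol I}\big(\ddot{\boldsymbol t}_{[\boldsymbol\eta]};\boldsymbol t^m\big)L_{\boldsymbol\eta,\ddot{\boldsymbol\xi}}(\ddot{\boldsymbol t})\Big]=\prod_{s=m+1}^{n-1}\frac{1}{\eta_s!}\ \mathrm{Sym}_{\ddot{\boldsymbol t}}\Big[W_{\boldsymbol I}\big(\ddot{\boldsymbol t}_{[\boldsymbol\eta]};\boldsymbol t^m\big)L_{\boldsymbol\eta,\ddot{\boldsymbol\xi}}(\ddot{\boldsymbol t})\Big].$$ (ii) For any partition $\boldsymbol J=(J_1,\dots,J_m)$ of $\{1,\dots,\xi_m\}$ with $\zeta_s:=\zeta_s(\boldsymbol J)\le\xi_s$ for $s=1,\dots,m-1$, and $\boldsymbol\zeta=(\zeta_1,\dots,\zeta_{m-1})$, $$\mathrm{Sym}_{\dot{\boldsymbol t}}\Big[\widetilde U_{\boldsymbol J}\big(\dot{\boldsymbol t}_{(\dot{\boldsymbol\xi}-\boldsymbol\zeta,\dot{\boldsymbol\xi}]};\check{\boldsymbol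 t}^m\big)\widetilde L_{\boldsymbol\zeta,\dot{\boldsymbol\xi}}(\dot{\boldsymbol t})\Big]=\prod_{s=1}^{m-1}\frac{1}{\zeta_s!}\ \mathrm{Sym}_{\dot{\boldsymbol t}}\Big[\widetilde W_{\boldsymbol J}\big(\dot{\boldsymbol t}_{(\dot{\boldsymbol\xi}-\boldsymbol\zeta,\dot{\boldsymbol\xi}]};\check{\boldsymbol t}^m\big)\widetilde L_{\boldsymbol\zeta,\dot{\boldsymbol\xi}}(\dot{\boldsymbol t})\Big],$$ where $\check{\boldsymbol t}^m=(t^m_{\xi_m},\dots,t^m_1)$.
   Context: Notation. $E_{ab}$ denotes a matrix unit; entries of an operator $X$ on $(\mathbb{C}^k)^{\otimes r}$ are written $X^{a_1\dots a_r}_{b_1\dots b_r}$ (upper = row, lower = column). $A^{(i)}$ is $A$ acting in the $i$-th tensor factor; $(A\otimes B)^{(ij)}=A^{(i)}B^{(j)}$. $\prod^{\rightarrow}_{1\le i\le k}X_i=X_1\cdots X_k$, $\prod^{\leftarrow}_{1\le i\le k}X_i=X_k\cdots X_1$. $R^{\langle k\rangle}(u)=1+u^{-1}\sum_{a,b=1}^kE_{ab}\otimes E_{ba}$. $\mathrm{Sym}_{y_1,\dots,y_k}f=\sum_{\sigma\in S_k}f(y_{\sigma(1)},\dots,y_{\sigma(k)})$. Yangian. $Y(\mathfrak{gl}_k)$ is generated by $(T^a_b)^{\{s\}}$, $a,b\le k$, $s\ge1$, with $T^a_b(u)=\delta_{ab}+\sum_{s\ge1}(T^a_b)^{\{s\}}u^{-s}$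 and relations $(u-v)[T^a_b(u),T^c_d(v)]=T^a_d(u)T^c_b(v)-T^a_d(v)T^c_b(u)$; $T(u)=\sum E_{ab}\otimes T^a_b(u)$. Embeddings $\phi_m:Y(\mathfrak{gl}_m)\to Y(\mathfrak{gl}_n)$, $T^a_b(u)\mapsto T^a_b(u)$, and $\psi_{n-m}:Y(\mathfrak{gl}_{n-m})\to Y(\mathfrak{gl}_n)$, $T^a_b(u)\mapsto T^{a+m}_{b+m}(u)$. Bethe vectors. For $k\ge2$, $\boldsymbol\xi=(\xi_1,\dots,\xi_{k-1})\in\mathbb Z_{\ge0}^{k-1}$, $\xi^a=\xi_1+\dots+\xi_a$ ($\xi^0=0$), variables $\boldsymbol t^a=(t^a_1,\dots,t^a_{\xi_a})$, in $\mathrm{End}((\mathbb C^k)^{\otimes\xi^{k-1}})\otimes Y(\mathfrak{gl}_k)$ set $\mathbb T^{[j]}(\boldsymbol t^j)=\prod^{\rightarrow}_{1\le i\le\xi_j}T^{(\xi^{j-1}+i)}(t^j_i)$, $\mathbb R^{[i,j]}(\boldsymbol t^i,\boldsymbol t^j)=\prod^{\rightarrow}_{1\le p\le\xi_i}\prod^{\leftarrow}_{1\le l\le\xi_j}R^{(\xi^{i-1}+p,\,\xi^{j-1}+l)}(t^i_p-t^j_l)$, $\widehat{\mathbb T}_{\boldsymbol\xi}(\boldsymbol t)=\mathbb T^{[1]}\cdots\mathbb T^{[k-1]}\prod^{\leftarrow}_{1\le i\le k-1}\prod^{\leftarrow}_{1\le j<i}\mathbb R^{[i,j]}(\boldsymbol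 t^i,\boldsymbol t^j)$; $\mathbb B^{\langle k\rangle}_{\boldsymbol\xi}(\boldsymbol t)$ is its entry with upper indices ($a$ repeated $\xi_a$ times, $a=1,\dots,k-1$) and lower indices ($a+1$ repeated $\xi_a$ times); $\mathbb B^{\langle1\rangle}=1$. $\dot{\boldsymbol\xi}=(\xi_1,\dots,\xi_{m-1})$, $\ddot{\boldsymbol\xi}=(\xi_{m+1},\dots,\xi_{n-1})$, $\dot{\boldsymbol t}=(\boldsymbol t^1,\dots,\boldsymbol t^{m-1})$, $\ddot{\boldsymbol t}=(\boldsymbol t^{m+1},\dots,\boldsymbol t^{n-1})$, $\boldsymbol t^m=(t^m_1,\dots,t^m_{\xi_m})$; $\mathrm{Sym}_{\dot{\boldsymbol t}}$ ($\mathrm{Sym}_{\ddot{\boldsymbol t}}$) is the composition of $\mathrm{Sym}_{\boldsymbol t^a}$ over $a=1,\dots,m-1$ (over $a=m+1,\dots,n-1$). Weight functions. For a partition $\boldsymbol I=(I_{m+1},\dots,I_n)$ of $\{1,\dots,M\}$, $\eta_l(\boldsymbol I)=|\bigcup_{k=l+1}^nI_k|$ and $i^{(l)}_1<\dots<i^{(l)}_{\eta_l(\boldsymbol I)}$ are the elements of $\bigcup_{k=l+1}^nI_k$ ($l=m,\dots,n-1$); for variables $\boldsymbol v^l=(v^l_1,\dots,v^l_{\eta_l(\boldsymbol I)})$, $U_{\boldsymbol I}(\boldsymbol v^{m+1},\dots,\boldsymbol v^{n-1};\boldsymbol v^m)=\prod_{l=m+1}^{n-1}\prod_{a=1}^{\eta_l}\Big(\prod_{c:\,i^{(l-1)}_c=i^{(l)}_a}\frac{1}{v^l_a-v^{l-1}_c}\prod_{d:\,i^{(l-1)}_d>i^{(l)}_a}\frac{v^l_a-v^{l-1}_d+1}{v^l_a-v^{l-1}_d}\prod_{b=a+1}^{\eta_l}\frac{v^l_b-v^l_a+1}{v^l_b-v^l_a}\Big)$,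 and $W_{\boldsymbol I}=\mathrm{Sym}_{\boldsymbol v^{m+1}}\cdots\mathrm{Sym}_{\boldsymbol v^{n-1}}U_{\boldsymbol I}$. For a partition $\boldsymbol J=(J_1,\dots,J_m)$ of $\{1,\dots,M\}$, $\zeta_l(\boldsymbol J)=|\bigcup_{k=1}^lJ_k|$ and $j^{(l)}_1<\dots<j^{(l)}_{\zeta_l(\boldsymbol J)}$ are the elements of $\bigcup_{k=1}^lJ_k$ ($l=1,\dots,m$); for $\boldsymbol u^l=(u^l_1,\dots,u^l_{\zeta_l(\boldsymbol J)})$, $\widetilde U_{\boldsymbol J}(\boldsymbol u^1,\dots,\boldsymbol u^{m-1};\boldsymbol u^m)=\prod_{l=2}^{m}\prod_{a=1}^{\zeta_l}\Big(\prod_{c:\,j^{(l-1)}_c<j^{(l)}_a}\frac{u^l_a-u^{l-1}_c+1}{u^l_a-u^{l-1}_c}\prod_{d:\,j^{(l-1)}_d=j^{(l)}_a}\frac{1}{u^l_a-u^{l-1}_d}\prod_{b=a+1}^{\zeta_l}\frac{u^l_a-u^l_b+1}{u^l_a-u^l_b}\Big)$, and $\widetilde W_{\boldsymbol J}=\mathrm{Sym}_{\boldsymbol u^1}\cdots\mathrm{Sym}_{\boldsymbol u^{m-1}}\widetilde U_{\boldsymbol J}$. Arguments: $(\ddot{\boldsymbol t}_{[\boldsymbol\eta]};\boldsymbol t^m)$ means $\boldsymbol v^l=(t^l_1,\dots,t^l_{\eta_l})$ ($l>m$), $\boldsymbol v^m=\boldsymbol t^m$; $(\dot{\boldsymbol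 t}_{(\dot{\boldsymbol\xi}-\boldsymbol\zeta,\dot{\boldsymbol\xi}]};\check{\boldsymbol t}^m)$ means $\boldsymbol u^l=(t^l_{\xi_l-\zeta_l+1},\dots,t^l_{\xi_l})$ ($l<m$), $\boldsymbol u^m=\check{\boldsymbol t}^m$. Functions $L,\widetilde L$ ($Y(\mathfrak{gl}_n)$-valued). With $\ddot{\boldsymbol t}_{(\boldsymbol\eta,\ddot{\boldsymbol\xi}]}$ the groups $(t^b_{\eta_b+1},\dots,t^b_{\xi_b})$, $b=m+1,\dots,n-1$, and $\dot{\boldsymbol t}_{[\dot{\boldsymbol\xi}-\boldsymbol\zeta]}$ the groups $(t^a_1,\dots,t^a_{\xi_a-\zeta_a})$, $a=1,\dots,m-1$: $L_{\boldsymbol\eta,\ddot{\boldsymbol\xi}}(\ddot{\boldsymbol t})=\prod_{a=m+1}^{n-2}\prod_{i=1}^{\eta_{a+1}}\prod_{j=\eta_a+1}^{\xi_a}\frac{t^{a+1}_i-t^a_j+1}{t^{a+1}_i-t^a_j}\prod_{l=m+1}^{n-1}\prod_{i=1}^{\eta_l}\frac{t^l_i-x+\Lambda_l}{t^l_i-x}\ \psi_{n-m}\big(\mathbb B^{\langle n-m\rangle}_{\ddot{\boldsymbol\xi}-\boldsymbol\eta}(\ddot{\boldsymbol t}_{(\boldsymbol\eta,\ddot{\boldsymbol\xi}]})\big)$, $\widetilde L_{\boldsymbol\zeta,\dot{\boldsymbol\xi}}(\dot{\boldsymbol t})=\prod_{a=1}^{m-2}\prod_{i=1}^{\xi_{a+1}-\zeta_{a+1}}\prod_{j=\xi_a-\zeta_a+1}^{\xi_a}\frac{t^{a+1}_i-t^a_j+1}{t^{a+1}_i-t^a_j}\prod_{l=1}^{m-1}\prod_{i=0}^{\zeta_l-1}\frac{t^l_{\xi_l-i}-x+\Lambda_{l+1}}{t^l_{\xi_l-i}-x}\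 \phi_m\big(\mathbb B^{\langle m\rangle}_{\dot{\boldsymbol\xi}-\boldsymbol\zeta}(\dot{\boldsymbol t}_{[\dot{\boldsymbol\xi}-\boldsymbol\zeta]})\big)$. *)

theory Defs
  imports Complex_Main "HOL-Combinatorics.Permutations"
begin

section \<open>Scalars: a unital associative C-algebra, presented by a central embedding of C\<close>

definition alg_emb :: "(complex \<Rightarrow> 'a::ring_1) \<Rightarrow> bool" where
  "alg_emb emb \<longleftrightarrow> (\<forall>x y. emb (x + y) = emb x + emb y) \<and> (\<forall>x y. emb (x * y) = emb x * emb y)
     \<and> emb 1 = 1 \<and> (\<forall>c z. emb c * z = z * emb c)"

definition yangian_rel :: "(complex \<Rightarrow> 'a::ring_1) \<Rightarrow> nat \<Rightarrow> (nat \<Rightarrow> nat \<Rightarrow> complex \<Rightarrow> 'a) \<Rightarrow> bool" where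
  "yangian_rel emb k T \<longleftrightarrow> (\<forall>a\<in>{1..k}. \<forall>b\<in>{1..k}. \<forall>c\<in>{1..k}. \<forall>d\<in>{1..k}. \<forall>u v.
      emb (u - v) * (T a b u * T c d v - T c d v * T a b u) = T a d u * T c b v - T a d v * T c b u)"

section \<open>Operators on (C^k)^{tensor r} with algebra-valued entries\<close>

text \<open>Multi-indices: lists of length r with entries in {1..k}; tensor factor i (1-based)
  is list position i-1. An operator is given by its entries X upper lower.\<close>
definition idx :: "nat \<Rightarrow> nat \<Rightarrow> nat list set" where
  "idx k r = {xs. length xs = r \<and> set xs \<subseteq> {1..k}}"

definition opmul :: "nat \<Rightarrow> nat \<Rightarrow> (nat list \<Rightarrow> nat list \<Rightarrow> 'a::ring_1) \<Rightarrow> (nat list \<Rightarrow> nat list \<Rightarrow> 'a) \<Rightarrow> nat list \<Rightarrow> nat list \<Rightarrow> 'a" where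
  "opmul k r X Y = (\<lambda>a b. \<Sum>c\<in>idx k r. X a c * Y c b)"

definition opone :: "nat list \<Rightarrow> nat list \<Rightarrow> 'a::ring_1" where
  "opone = (\<lambda>a b. if a = b then 1 else 0)"

definition opprod :: "nat \<Rightarrow> nat \<Rightarrow> (nat list \<Rightarrow> nat list \<Rightarrow> 'a::ring_1) list \<Rightarrow> nat list \<Rightarrow> nat list \<Rightarrow> 'a" where
  "opprod k r Xs = foldr (opmul k r) Xs opone"

text \<open>T^{(i)}(u) = sum E_ab^{(i)} (x) T^a_b(u).\<close>
definition Tfac :: "(nat \<Rightarrow> nat \<Rightarrow> complex \<Rightarrow> 'a::ring_1) \<Rightarrow> nat \<Rightarrow> nat \<Rightarrow> complex \<Rightarrow> nat list \<Rightarrow> nat list \<Rightarrow> 'a" where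
  "Tfac T r i u = (\<lambda>a b. if (\<forall>j<r. j \<noteq> i - 1 \<longrightarrow> a ! j = b ! j) then T (a ! (i - 1)) (b ! (i - 1)) u else 0)"

text \<open>R^{(i,j)}(u) = 1 + u^{-1} sum E_ab^{(i)} E_ba^{(j)} (i \<noteq> j).\<close>
definition Rfac :: "(complex \<Rightarrow> 'a::ring_1) \<Rightarrow> nat \<Rightarrow> nat \<Rightarrow> nat \<Rightarrow> complex \<Rightarrow> nat list \<Rightarrow> nat list \<Rightarrow> 'a" where
  "Rfac emb r i j u = (\<lambda>a b. emb ((if a = b then 1 else 0) +
      (if a ! (i - 1) = b ! (j - 1) \<and> a ! (j - 1) = b ! (i - 1) \<and>
          (\<forall>l<r. l \<noteq> i - 1 \<longrightarrow> l \<noteq> j - 1 \<longrightarrow> a ! l = b ! l) then 1 / u else 0)))"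

definition cum :: "(nat \<Rightarrow> nat) \<Rightarrow> nat \<Rightarrow> nat" where
  "cum \<xi> a = (\<Sum>j=1..a. \<xi> j)"

definition TTgrp :: "(nat \<Rightarrow> nat \<Rightarrow> complex \<Rightarrow> 'a::ring_1) \<Rightarrow> nat \<Rightarrow> (nat \<Rightarrow> nat) \<Rightarrow> (nat \<Rightarrow> nat \<Rightarrow> complex) \<Rightarrow> nat \<Rightarrow> nat list \<Rightarrow> nat list \<Rightarrow> 'a" where
  "TTgrp T k \<xi> t j = opprod k (cum \<xi> (k - 1))
     [Tfac T (cum \<xi> (k - 1)) (cum \<xi> (j - 1) + i) (t j i). i \<leftarrow> [1..<\<xi> j + 1]]"

definition RRgrp :: "(complex \<Rightarrow> 'a::ring_1) \<Rightarrow> nat \<Rightarrow> (nat \<Rightarrow> nat) \<Rightarrow> (nat \<Rightarrow> nat \<Rightarrow> complex) \<Rightarrow> nat \<Rightarrow> nat \<Rightarrow> nat list \<Rightarrow> nat list \<Rightarrow> 'a" where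
  "RRgrp emb k \<xi> t i j = opprod k (cum \<xi> (k - 1))
     [Rfac emb (cum \<xi> (k - 1)) (cum \<xi> (i - 1) + p) (cum \<xi> (j - 1) + l) (t i p - t j l).
        p \<leftarrow> [1..<\<xi> i + 1], l \<leftarrow> rev [1..<\<xi> j + 1]]"

definition That :: "(complex \<Rightarrow> 'a::ring_1) \<Rightarrow> (nat \<Rightarrow> nat \<Rightarrow> complex \<Rightarrow> 'a) \<Rightarrow> nat \<Rightarrow> (nat \<Rightarrow> nat) \<Rightarrow> (nat \<Rightarrow> nat \<Rightarrow> complex) \<Rightarrow> nat list \<Rightarrow> nat list \<Rightarrow> 'a" where
  "That emb T k \<xi> t = opprod k (cum \<xi> (k - 1))
     ([TTgrp T k \<xi> t j. j \<leftarrow> [1..<k]] @ [RRgrp emb k \<xi> t i j. i \<leftarrow> rev [1..<k], j \<leftarrow> rev [1..<i]])"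

text \<open>B^{<k>}_xi(t): entry of hat T with upper indices (1^xi_1,...,(k-1)^xi_{k-1}) and lower
  indices (2^xi_1,...,k^xi_{k-1}); t j i = t^j_i. For k = 1 this is 1.\<close>
definition Bethe :: "(complex \<Rightarrow> 'a::ring_1) \<Rightarrow> (nat \<Rightarrow> nat \<Rightarrow> complex \<Rightarrow> 'a) \<Rightarrow> nat \<Rightarrow> (nat \<Rightarrow> nat) \<Rightarrow> (nat \<Rightarrow> nat \<Rightarrow> complex) \<Rightarrow> 'a" where
  "Bethe emb T k \<xi> t = (if k \<le> 1 then 1 else
     That emb T k \<xi> t (concat [replicate (\<xi> a) a. a \<leftarrow> [1..<k]])
                      (concat [replicate (\<xi> a) (a + 1). a \<leftarrow> [1..<k]]))"

text \<open>Sym over the groups of variables t^a (a in G), the group t^a having sz a variables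
  t a 1, ..., t a (sz a).\<close>
definition perm_fams :: "nat set \<Rightarrow> (nat \<Rightarrow> nat) \<Rightarrow> (nat \<Rightarrow> nat \<Rightarrow> nat) set" where
  "perm_fams G sz = {\<sigma>. \<forall>a. (a \<in> G \<longrightarrow> \<sigma> a permutes {1..sz a}) \<and> (a \<notin> G \<longrightarrow> \<sigma> a = id)}"

definition SymG :: "nat set \<Rightarrow> (nat \<Rightarrow> nat) \<Rightarrow> ((nat \<Rightarrow> nat \<Rightarrow> complex) \<Rightarrow> 'b::comm_monoid_add) \<Rightarrow> (nat \<Rightarrow> nat \<Rightarrow> complex) \<Rightarrow> 'b" where
  "SymG G sz F t = (\<Sum>\<sigma>\<in>perm_fams G sz. F (\<lambda>a i. t a (\<sigma> a i)))"

definition is_partition :: "nat set \<Rightarrow> (nat \<Rightarrow> nat set) \<Rightarrow> nat \<Rightarrow> bool" where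
  "is_partition K P M \<longleftrightarrow> (\<Union>k\<in>K. P k) = {1..M} \<and> (\<forall>k\<in>K. \<forall>l\<in>K. k \<noteq> l \<longrightarrow> P k \<inter> P l = {})"

definition etaI :: "nat \<Rightarrow> (nat \<Rightarrow> nat set) \<Rightarrow> nat \<Rightarrow> nat" where
  "etaI n I l = card (\<Union>k\<in>{l+1..n}. I k)"

definition elI :: "nat \<Rightarrow> (nat \<Rightarrow> nat set) \<Rightarrow> nat \<Rightarrow> nat \<Rightarrow> nat" where
  "elI n I l c = sorted_list_of_set (\<Union>k\<in>{l+1..n}. I k) ! (c - 1)"

definition UI :: "nat \<Rightarrow> nat \<Rightarrow> (nat \<Rightarrow> nat set) \<Rightarrow> (nat \<Rightarrow> nat \<Rightarrow> complex) \<Rightarrow> complex" where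
  "UI n m I v = (\<Prod>l\<in>{m+1..n-1}. \<Prod>a\<in>{1..etaI n I l}.
      (\<Prod>c\<in>{c\<in>{1..etaI n I (l-1)}. elI n I (l-1) c = elI n I l a}. 1 / (v l a - v (l-1) c)) *
      (\<Prod>d\<in>{d\<in>{1..etaI n I (l-1)}. elI n I (l-1) d > elI n I l a}.
          (v l a - v (l-1) d + 1) / (v l a - v (l-1) d)) *
      (\<Prod>b\<in>{a+1..etaI n I l}. (v l b - v l a + 1) / (v l b - v l a)))"

definition WI :: "nat \<Rightarrow> nat \<Rightarrow> (nat \<Rightarrow> nat set) \<Rightarrow> (nat \<Rightarrow> nat \<Rightarrow> complex) \<Rightarrow> complex" where
  "WI n m I v = SymG {m+1..n-1} (etaI n I) (UI n m I) v"

definition zetaJ :: "(nat \<Rightarrow> nat set) \<Rightarrow> nat \<Rightarrow> nat" where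
  "zetaJ J l = card (\<Union>k\<in>{1..l}. J k)"

definition elJ :: "(nat \<Rightarrow> nat set) \<Rightarrow> nat \<Rightarrow> nat \<Rightarrow> nat" where
  "elJ J l c = sorted_list_of_set (\<Union>k\<in>{1..l}. J k) ! (c - 1)"

definition UJ :: "nat \<Rightarrow> (nat \<Rightarrow> nat set) \<Rightarrow> (nat \<Rightarrow> nat \<Rightarrow> complex) \<Rightarrow> complex" where
  "UJ m J u = (\<Prod>l\<in>{2..m}. \<Prod>a\<in>{1..zetaJ J l}.
      (\<Prod>c\<in>{c\<in>{1..zetaJ J (l-1)}. elJ J (l-1) c < elJ J l a}.
          (u l a - u (l-1) c + 1) / (u l a - u (l-1) c)) *
      (\<Prod>d\<in>{d\<in>{1..zetaJ J (l-1)}. elJ J (l-1) d = elJ J l a}. 1 / (u l a - u (l-1) d)) *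
      (\<Prod>b\<in>{a+1..zetaJ J l}. (u l a - u l b + 1) / (u l a - u l b)))"

definition WJ :: "nat \<Rightarrow> (nat \<Rightarrow> nat set) \<Rightarrow> (nat \<Rightarrow> nat \<Rightarrow> complex) \<Rightarrow> complex" where
  "WJ m J u = SymG {1..m-1} (zetaJ J) (UJ m J) u"

definition Lfun :: "(complex \<Rightarrow> 'a::ring_1) \<Rightarrow> (nat \<Rightarrow> nat \<Rightarrow> complex \<Rightarrow> 'a) \<Rightarrow> nat \<Rightarrow> nat \<Rightarrow> complex \<Rightarrow> (nat \<Rightarrow> complex)
     \<Rightarrow> (nat \<Rightarrow> nat) \<Rightarrow> (nat \<Rightarrow> nat) \<Rightarrow> (nat \<Rightarrow> nat \<Rightarrow> complex) \<Rightarrow> 'a" where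
  "Lfun emb T n m x \<Lambda> \<xi> \<eta> t =
     emb ((\<Prod>a\<in>{m+1..n-2}. \<Prod>i\<in>{1..\<eta> (a+1)}. \<Prod>j\<in>{\<eta> a + 1..\<xi> a}.
             (t (a+1) i - t a j + 1) / (t (a+1) i - t a j)) *
          (\<Prod>l\<in>{m+1..n-1}. \<Prod>i\<in>{1..\<eta> l}. (t l i - x + \<Lambda> l) / (t l i - x)))
     * Bethe emb (\<lambda>a b. T (a + m) (b + m)) (n - m) (\<lambda>a. \<xi> (a + m) - \<eta> (a + m))
             (\<lambda>a i. t (a + m) (\<eta> (a + m) + i))"

definition Ltil :: "(complex \<Rightarrow> 'a::ring_1) \<Rightarrow> (nat \<Rightarrow> nat \<Rightarrow> complex \<Rightarrow> 'a) \<Rightarrow> nat \<Rightarrow> complex \<Rightarrow> (nat \<Rightarrow> complex)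
     \<Rightarrow> (nat \<Rightarrow> nat) \<Rightarrow> (nat \<Rightarrow> nat) \<Rightarrow> (nat \<Rightarrow> nat \<Rightarrow> complex) \<Rightarrow> 'a" where
  "Ltil emb T m x \<Lambda> \<xi> \<zeta> t =
     emb ((\<Prod>a\<in>{1..m-2}. \<Prod>i\<in>{1..\<xi> (a+1) - \<zeta> (a+1)}. \<Prod>j\<in>{\<xi> a - \<zeta> a + 1..\<xi> a}.
             (t (a+1) i - t a j + 1) / (t (a+1) i - t a j)) *
          (\<Prod>l\<in>{1..m-1}. \<Prod>i\<in>{..<\<zeta> l}. (t l (\<xi> l - i) - x + \<Lambda> (l+1)) / (t l (\<xi> l - i) - x)))
     * Bethe emb T m (\<lambda>a. \<xi> a - \<zeta> a) t"

text \<open>Argument (dot t_{(xi - zeta, xi]}; check t^m) of the tilde weight function.\<close>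
definition argJ :: "nat \<Rightarrow> (nat \<Rightarrow> nat) \<Rightarrow> (nat \<Rightarrow> nat) \<Rightarrow> (nat \<Rightarrow> nat \<Rightarrow> complex) \<Rightarrow> nat \<Rightarrow> nat \<Rightarrow> complex" where
  "argJ m \<xi> \<zeta> t = (\<lambda>l a. if l = m then t m (\<xi> m + 1 - a) else t l (\<xi> l - \<zeta> l + a))"

end

theory Submission
  imports Defs
begin

(* W_I is the symmetrization of U_I over the permutations of the first eta_s variables of each
   group t^s, and W_J that of U_J over the permutations of the last zeta_s variables.  These
   permutations are among those summed over by Sym, and L (resp. L-tilde) is invariant under them.
   Substituting W = sum_tau U o tau into the right-hand side and reindexing Sym by sigma o tau
   therefore produces every term of Sym[U L] exactly prod_s eta_s! (resp. prod_s zeta_s!) times.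
   Neither the Yangian relations, nor the partition property of I and J, nor 1 <= m < n play
   any role. *)

lemma alg_emb_add: "alg_emb emb \<Longrightarrow> emb (x + y) = emb x + emb y"
  unfolding alg_emb_def by blast

lemma alg_emb_mult: "alg_emb emb \<Longrightarrow> emb (x * y) = emb x * emb y"
  unfolding alg_emb_def by blast

lemma alg_emb_one: "alg_emb emb \<Longrightarrow> emb 1 = 1"
  unfolding alg_emb_def by blast

lemma alg_emb_zero: "alg_emb emb \<Longrightarrow> emb 0 = 0"
  using alg_emb_add[of emb 0 0] by simp

lemma alg_emb_sum: "alg_emb emb \<Longrightarrow> emb (\<Sum>x\<in>A. f x) = (\<Sum>x\<in>A. emb (f x))"
  by (induction A rule: infinite_finite_induct) (simp_all add: alg_emb_zero alg_emb_add)

lemma alg_emb_of_nat: "alg_emb emb \<Longrightarrow> emb (of_nat k) = of_nat k"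
  by (induction k) (simp_all add: alg_emb_zero alg_emb_add alg_emb_one)

lemma Bethe_cong:
  assumes "\<And>j i. 0 < i \<Longrightarrow> i \<le> \<xi> j \<Longrightarrow> t j i = t' j i"
  shows "Bethe emb T k \<xi> t = Bethe emb T k \<xi> t'"
proof -
  have TT: "TTgrp T k \<xi> t j = TTgrp T k \<xi> t' j" for j
    unfolding TTgrp_def by (intro arg_cong[where f="opprod _ _"] map_cong refl) (auto simp: assms)
  have RR: "RRgrp emb k \<xi> t i j = RRgrp emb k \<xi> t' i j" for i j
    unfolding RRgrp_def
    by (intro arg_cong[where f="opprod _ _"] arg_cong[where f=concat] map_cong refl) (auto simp: assms)
  show ?thesis
    unfolding Bethe_def That_def TT RR ..
qed

lemma prod_permutes_reindex:
  "p permutes S \<Longrightarrow> (\<Prod>i\<in>S. g (p i)) = (\<Prod>i\<in>S. g i :: 'b::comm_monoid_mult)"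
  using prod.permute[of p S g] by (simp add: comp_def)

lemma prod_lessThan_diff_reindex:
  fixes z k :: nat
  assumes "z \<le> k"
  shows "(\<Prod>i<z. g (k - i)) = (\<Prod>j\<in>{k-z+1..k}. g j :: 'b::comm_monoid_mult)"
  by (rule prod.reindex_bij_witness[where i="\<lambda>j. k - j" and j="\<lambda>i. k - i"]) (use assms in auto)

lemma perm_fams_permutes: "\<sigma> \<in> perm_fams G sz \<Longrightarrow> \<sigma> a permutes {1..sz a}"
  unfolding perm_fams_def by (cases "a \<in> G") auto

lemma perm_fams_outside: "\<sigma> \<in> perm_fams G sz \<Longrightarrow> a \<notin> G \<Longrightarrow> \<sigma> a = id"
  unfolding perm_fams_def by auto

lemma perm_fams_mono:
  assumes "\<And>a. a \<in> G \<Longrightarrow> sz a \<le> sz' a"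
  shows "perm_fams G sz \<subseteq> perm_fams G sz'"
proof -
  have "p permutes {1..sz' a}" if "p permutes {1..sz a}" "a \<in> G" for p a
    by (rule permutes_subset[OF that(1)]) (use assms[OF that(2)] in auto)
  then show ?thesis
    unfolding perm_fams_def by blast
qed

lemma sum_perm_fams_compose_right:
  assumes h: "h \<in> perm_fams G sz"
  shows "(\<Sum>\<sigma>\<in>perm_fams G sz. F (\<lambda>a. \<sigma> a \<circ> h a)) = sum F (perm_fams G sz)"
proof (rule sum.reindex_bij_witness[where i="\<lambda>\<sigma> a. \<sigma> a \<circ> inv (h a)" and j="\<lambda>\<sigma> a. \<sigma> a \<circ> h a"])
  have hp: "\<And>a. h a permutes {1..sz a}" using perm_fams_permutes[OF h] .
  then show "(\<lambda>a. \<sigma> a \<circ> h a \<circ> inv (h a)) = \<sigma>" "(\<lambda>a. \<sigma> a \<circ> inv (h a) \<circ> h a) = \<sigma>" for \<sigma>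
    by (simp_all add: o_assoc[symmetric] permutes_inv_o[OF hp])
  show "(\<lambda>a. \<sigma> a \<circ> h a) \<in> perm_fams G sz" "(\<lambda>a. \<sigma> a \<circ> inv (h a)) \<in> perm_fams G sz"
    if "\<sigma> \<in> perm_fams G sz" for \<sigma>
    using h that unfolding perm_fams_def by (auto intro: permutes_compose permutes_inv)
qed simp

lemma bij_betw_perm_fams_PiE:
  "bij_betw (\<lambda>\<sigma>. restrict \<sigma> G) (perm_fams G sz) (\<Pi>\<^sub>E a\<in>G. {p. p permutes {1..sz a}})"
  by (rule bij_betw_byWitness[where f'="\<lambda>f a. if a \<in> G then f a else id"])
    (auto simp: perm_fams_def PiE_def extensional_def)

lemma card_perm_fams: "finite G \<Longrightarrow> card (perm_fams G sz) = (\<Prod>a\<in>G. fact (sz a))"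
  using bij_betw_same_card[OF bij_betw_perm_fams_PiE] by (simp add: card_PiE card_permutations)

lemma SymG_average:
  fixes emb :: "complex \<Rightarrow> 'a::ring_1"
  assumes emb: "alg_emb emb"
    and \<phi>: "\<And>k. k \<in> K \<Longrightarrow> \<phi> k \<in> perm_fams G sz"
    and W: "\<And>s. W s = (\<Sum>k\<in>K. V (\<lambda>a i. s a (\<phi> k a i)))"
    and L: "\<And>s k. k \<in> K \<Longrightarrow> L (\<lambda>a i. s a (\<phi> k a i)) = L s"
    and c: "c * of_nat (card K) = 1"
  shows "SymG G sz (\<lambda>s. emb (V s) * L s) t = emb c * SymG G sz (\<lambda>s. emb (W s) * L s) t"
proof -
  define F where "F \<sigma> = emb (V (\<lambda>a i. t a (\<sigma> a i))) * L (\<lambda>a i. t a (\<sigma> a i))" for \<sigma>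
  have "SymG G sz (\<lambda>s. emb (W s) * L s) t = (\<Sum>\<sigma>\<in>perm_fams G sz. \<Sum>k\<in>K. F (\<lambda>a. \<sigma> a \<circ> \<phi> k a))"
    unfolding SymG_def W alg_emb_sum[OF emb] sum_distrib_right F_def comp_def
    by (intro sum.cong refl arg_cong2[where f="(*)"] L[symmetric])
  also have "\<dots> = (\<Sum>k\<in>K. \<Sum>\<sigma>\<in>perm_fams G sz. F (\<lambda>a. \<sigma> a \<circ> \<phi> k a))"
    by (rule sum.swap)
  also have "\<dots> = (\<Sum>k\<in>K. \<Sum>\<sigma>\<in>perm_fams G sz. F \<sigma>)"
    by (intro sum.cong refl sum_perm_fams_compose_right \<phi>)
  also have "\<dots> = emb (of_nat (card K)) * SymG G sz (\<lambda>s. emb (V s) * L s) t"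
    by (simp add: SymG_def F_def alg_emb_of_nat[OF emb])
  finally have "emb c * SymG G sz (\<lambda>s. emb (W s) * L s) t
      = emb (c * of_nat (card K)) * SymG G sz (\<lambda>s. emb (V s) * L s) t"
    by (simp add: alg_emb_mult[OF emb] mult.assoc)
  then show ?thesis
    by (simp add: c alg_emb_one[OF emb])
qed

definition shift_perm :: "nat \<Rightarrow> (nat \<Rightarrow> nat) \<Rightarrow> nat \<Rightarrow> nat" where
  "shift_perm c p j = (if c < j then c + p (j - c) else j)"

lemma shift_perm_id [simp]: "shift_perm c id = id"
  by (auto simp: shift_perm_def fun_eq_iff)

lemma shift_perm_add: "p 0 = 0 \<Longrightarrow> shift_perm c p (c + j) = c + p j"
  by (simp add: shift_perm_def)

lemma shift_perm_permutes:
  assumes p: "p permutes {1..z}"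
  shows "shift_perm c p permutes {c+1..c+z}"
proof -
  have bij: "bij_betw ((+) c) {1..z} {c+1..c+z}"
    by (auto simp: bij_betw_def)
  have "shift_perm c p = (\<lambda>x. if x \<in> {c+1..c+z} then c + p (inv_into {1..z} ((+) c) x) else x)"
  proof
    fix x
    show "shift_perm c p x = (if x \<in> {c+1..c+z} then c + p (inv_into {1..z} ((+) c) x) else x)"
    proof (cases "x \<in> {c+1..c+z}")
      case True
      then have "inv_into {1..z} ((+) c) x = x - c"
        by (intro inv_into_f_eq) auto
      with True show ?thesis by (simp add: shift_perm_def)
    next
      case False
      then have "p (x - c) = x - c" if "c < x"
        using that by (intro permutes_not_in[OF p]) auto
      with False show ?thesis
        by (auto simp: shift_perm_def)
    qed
  qed
  then show ?thesis
    using permutes_bij_inv_into[OF p bij] by simp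
qed

lemma Lfun_permute_leading_vars:
  assumes \<tau>: "\<And>a. \<tau> a permutes {1..\<eta> a}"
  shows "Lfun emb T n m x \<Lambda> \<xi> \<eta> (\<lambda>a i. s a (\<tau> a i)) = Lfun emb T n m x \<Lambda> \<xi> \<eta> s"
proof -
  have fixed: "\<tau> a j = j" if "\<eta> a < j" for a j
    using that by (intro permutes_not_in[OF \<tau>]) simp
  have cross_factor: "(\<Prod>i\<in>{1..\<eta> (a+1)}. \<Prod>j\<in>{\<eta> a + 1..\<xi> a}.
          (s (a+1) (\<tau> (a+1) i) - s a (\<tau> a j) + 1) / (s (a+1) (\<tau> (a+1) i) - s a (\<tau> a j)))
      = (\<Prod>i\<in>{1..\<eta> (a+1)}. \<Prod>j\<in>{\<eta> a + 1..\<xi> a}. (s (a+1) i - s a j + 1) / (s (a+1) i - s a j))"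
    for a
    using prod_permutes_reindex[OF \<tau>,
        of "\<lambda>i. \<Prod>j\<in>{\<eta> a + 1..\<xi> a}. (s (a+1) i - s a j + 1) / (s (a+1) i - s a j)"]
    by (simp add: fixed)
  have x_factor: "(\<Prod>i\<in>{1..\<eta> l}. (s l (\<tau> l i) - x + \<Lambda> l) / (s l (\<tau> l i) - x))
      = (\<Prod>i\<in>{1..\<eta> l}. (s l i - x + \<Lambda> l) / (s l i - x))" for l
    by (rule prod_permutes_reindex[OF \<tau>])
  have bethe: "Bethe emb (\<lambda>a b. T (a + m) (b + m)) (n - m) (\<lambda>a. \<xi> (a + m) - \<eta> (a + m))
        (\<lambda>a i. s (a + m) (\<tau> (a + m) (\<eta> (a + m) + i)))
      = Bethe emb (\<lambda>a b. T (a + m) (b + m)) (n - m) (\<lambda>a. \<xi> (a + m) - \<eta> (a + m))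
        (\<lambda>a i. s (a + m) (\<eta> (a + m) + i))"
    by (rule Bethe_cong) (simp add: fixed)
  show ?thesis
    unfolding Lfun_def cross_factor x_factor bethe ..
qed

lemma Ltil_permute_trailing_vars:
  assumes h: "\<And>a. h a permutes {\<xi> a - \<zeta> a + 1..\<xi> a}"
    and le: "\<And>a. a \<in> {1..m-1} \<Longrightarrow> \<zeta> a \<le> \<xi> a"
  shows "Ltil emb T m x \<Lambda> \<xi> \<zeta> (\<lambda>a i. s a (h a i)) = Ltil emb T m x \<Lambda> \<xi> \<zeta> s"
proof -
  have fixed: "h a j = j" if "j \<le> \<xi> a - \<zeta> a" for a j
    using that by (intro permutes_not_in[OF h]) simp
  have inner: "(\<Prod>j\<in>{\<xi> a - \<zeta> a + 1..\<xi> a}. (y - s a (h a j) + 1) / (y - s a (h a j)))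
      = (\<Prod>j\<in>{\<xi> a - \<zeta> a + 1..\<xi> a}. (y - s a j + 1) / (y - s a j))" for y a
    by (rule prod_permutes_reindex[OF h])
  have cross_factor: "(\<Prod>i\<in>{1..\<xi> (a+1) - \<zeta> (a+1)}. \<Prod>j\<in>{\<xi> a - \<zeta> a + 1..\<xi> a}.
          (s (a+1) (h (a+1) i) - s a (h a j) + 1) / (s (a+1) (h (a+1) i) - s a (h a j)))
      = (\<Prod>i\<in>{1..\<xi> (a+1) - \<zeta> (a+1)}. \<Prod>j\<in>{\<xi> a - \<zeta> a + 1..\<xi> a}.
          (s (a+1) i - s a j + 1) / (s (a+1) i - s a j))" for a
    by (simp add: fixed inner[simplified])
  have x_factor: "(\<Prod>l\<in>{1..m-1}. \<Prod>i<\<zeta> l. (s l (h l (\<xi> l - i)) - x + \<Lambda> (l+1)) / (s l (h l (\<xi> l - i)) - x))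
      = (\<Prod>l\<in>{1..m-1}. \<Prod>i<\<zeta> l. (s l (\<xi> l - i) - x + \<Lambda> (l+1)) / (s l (\<xi> l - i) - x))"
  proof (rule prod.cong[OF refl])
    fix l assume l: "l \<in> {1..m-1}"
    show "(\<Prod>i<\<zeta> l. (s l (h l (\<xi> l - i)) - x + \<Lambda> (l+1)) / (s l (h l (\<xi> l - i)) - x))
      = (\<Prod>i<\<zeta> l. (s l (\<xi> l - i) - x + \<Lambda> (l+1)) / (s l (\<xi> l - i) - x))"
      using prod_permutes_reindex[OF h, of "\<lambda>j. (s l j - x + \<Lambda> (l+1)) / (s l j - x)" l]
        prod_lessThan_diff_reindex[OF le[OF l], of "\<lambda>j. (s l (h l j) - x + \<Lambda> (l+1)) / (s l (h l j) - x)"]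
        prod_lessThan_diff_reindex[OF le[OF l], of "\<lambda>j. (s l j - x + \<Lambda> (l+1)) / (s l j - x)"]
      by simp
  qed
  have bethe: "Bethe emb T m (\<lambda>a. \<xi> a - \<zeta> a) (\<lambda>a i. s a (h a i)) = Bethe emb T m (\<lambda>a. \<xi> a - \<zeta> a) s"
    by (rule Bethe_cong) (simp add: fixed)
  show ?thesis
    unfolding Ltil_def cross_factor x_factor bethe ..
qed

lemma argJ_shift_perm:
  assumes "\<And>a. \<tau> a 0 = 0" and "\<tau> m = id"
  shows "argJ m \<xi> \<zeta> (\<lambda>a i. s a (shift_perm (\<xi> a - \<zeta> a) (\<tau> a) i)) = (\<lambda>a i. argJ m \<xi> \<zeta> s a (\<tau> a i))"
  by (simp add: argJ_def shift_perm_add assms fun_eq_iff)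

lemma SymG_UI_Lfun_eq_WI:
  fixes emb :: "complex \<Rightarrow> 'a::ring_1"
  assumes emb: "alg_emb emb"
    and le: "\<forall>s\<in>{m+1..n-1}. etaI n I s \<le> \<xi> s"
  shows "SymG {m+1..n-1} \<xi> (\<lambda>s. emb (UI n m I s) * Lfun emb T n m x \<Lambda> \<xi> (etaI n I) s) t
      = emb (\<Prod>s\<in>{m+1..n-1}. 1 / of_nat (fact (etaI n I s))) *
        SymG {m+1..n-1} \<xi> (\<lambda>s. emb (WI n m I s) * Lfun emb T n m x \<Lambda> \<xi> (etaI n I) s) t"
proof (rule SymG_average[OF emb, where K="perm_fams {m+1..n-1} (etaI n I)" and \<phi>="\<lambda>\<tau>. \<tau>"])
  show "\<tau> \<in> perm_fams {m+1..n-1} \<xi>" if "\<tau> \<in> perm_fams {m+1..n-1} (etaI n I)" for \<tau>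
    using that perm_fams_mono[of "{m+1..n-1}" "etaI n I" \<xi>] le by blast
  show "WI n m I s = (\<Sum>\<tau>\<in>perm_fams {m+1..n-1} (etaI n I). UI n m I (\<lambda>a i. s a (\<tau> a i)))" for s
    unfolding WI_def SymG_def ..
  show "Lfun emb T n m x \<Lambda> \<xi> (etaI n I) (\<lambda>a i. s a (\<tau> a i)) = Lfun emb T n m x \<Lambda> \<xi> (etaI n I) s"
    if "\<tau> \<in> perm_fams {m+1..n-1} (etaI n I)" for s \<tau>
    using that by (intro Lfun_permute_leading_vars perm_fams_permutes)
  show "(\<Prod>s\<in>{m+1..n-1}. 1 / of_nat (fact (etaI n I s))) *
      of_nat (card (perm_fams {m+1..n-1} (etaI n I))) = (1::complex)"
    by (simp add: card_perm_fams prod.distrib[symmetric])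
qed

lemma SymG_UJ_Ltil_eq_WJ:
  fixes emb :: "complex \<Rightarrow> 'a::ring_1"
  assumes emb: "alg_emb emb"
    and le: "\<forall>s\<in>{1..m-1}. zetaJ J s \<le> \<xi> s"
  shows "SymG {1..m-1} \<xi> (\<lambda>s. emb (UJ m J (argJ m \<xi> (zetaJ J) s)) * Ltil emb T m x \<Lambda> \<xi> (zetaJ J) s) t
      = emb (\<Prod>s\<in>{1..m-1}. 1 / of_nat (fact (zetaJ J s))) *
        SymG {1..m-1} \<xi> (\<lambda>s. emb (WJ m J (argJ m \<xi> (zetaJ J) s)) * Ltil emb T m x \<Lambda> \<xi> (zetaJ J) s) t"
proof -
  define G where "G = {1..m-1}"
  define \<zeta> where "\<zeta> = zetaJ J"
  define \<phi> where "\<phi> \<tau> a = shift_perm (\<xi> a - \<zeta> a) (\<tau> a)" for \<tau> :: "nat \<Rightarrow> nat \<Rightarrow> nat" and a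
  have \<phi>_permutes: "\<phi> \<tau> a permutes {\<xi> a - \<zeta> a + 1..\<xi> a}" if \<tau>: "\<tau> \<in> perm_fams G \<zeta>" for \<tau> a
  proof (cases "a \<in> G")
    case True
    then have "\<xi> a - \<zeta> a + \<zeta> a = \<xi> a"
      using le unfolding G_def \<zeta>_def by simp
    then show ?thesis
      using shift_perm_permutes[OF perm_fams_permutes[OF \<tau>], of "\<xi> a - \<zeta> a" a] by (simp add: \<phi>_def)
  qed (simp add: \<phi>_def perm_fams_outside[OF \<tau>])
  show ?thesis
    unfolding G_def[symmetric] \<zeta>_def[symmetric]
  proof (rule SymG_average[OF emb, where K="perm_fams G \<zeta>" and \<phi>=\<phi>])
    show "\<phi> \<tau> \<in> perm_fams G \<xi>" if \<tau>: "\<tau> \<in> perm_fams G \<zeta>" for \<tau>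
    proof -
      have "\<phi> \<tau> a permutes {1..\<xi> a}" for a
        by (rule permutes_subset[OF \<phi>_permutes[OF \<tau>]]) auto
      then show ?thesis
        unfolding perm_fams_def by (simp add: \<phi>_def perm_fams_outside[OF \<tau>])
    qed
    show "WJ m J (argJ m \<xi> \<zeta> s) = (\<Sum>\<tau>\<in>perm_fams G \<zeta>. UJ m J (argJ m \<xi> \<zeta> (\<lambda>a i. s a (\<phi> \<tau> a i))))" for s
    proof -
      have "argJ m \<xi> \<zeta> (\<lambda>a i. s a (\<phi> \<tau> a i)) = (\<lambda>a i. argJ m \<xi> \<zeta> s a (\<tau> a i))"
        if \<tau>: "\<tau> \<in> perm_fams G \<zeta>" for \<tau>
      proof -
        have "\<tau> a 0 = 0" for a
          by (rule permutes_not_in[OF perm_fams_permutes[OF \<tau>]]) simp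
        moreover have "\<tau> m = id"
          by (rule perm_fams_outside[OF \<tau>]) (simp add: G_def, arith)
        ultimately show ?thesis
          unfolding \<phi>_def by (rule argJ_shift_perm)
      qed
      then show ?thesis
        unfolding WJ_def SymG_def G_def[symmetric] \<zeta>_def[symmetric] by simp
    qed
    show "Ltil emb T m x \<Lambda> \<xi> \<zeta> (\<lambda>a i. s a (\<phi> \<tau> a i)) = Ltil emb T m x \<Lambda> \<xi> \<zeta> s"
      if "\<tau> \<in> perm_fams G \<zeta>" for s \<tau>
      using le by (intro Ltil_permute_trailing_vars \<phi>_permutes[OF that]) (simp add: \<zeta>_def)
    show "(\<Prod>s\<in>G. 1 / of_nat (fact (\<zeta> s))) * of_nat (card (perm_fams G \<zeta>)) = (1::complex)"
      by (simp add: G_def card_perm_fams prod.distrib[symmetric])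
  qed
qed

theorem lemma6p2:
  fixes emb :: "complex \<Rightarrow> 'a::ring_1"
    and T :: "nat \<Rightarrow> nat \<Rightarrow> complex \<Rightarrow> 'a"
    and n m :: nat and \<xi> :: "nat \<Rightarrow> nat"
    and x :: complex and \<Lambda> :: "nat \<Rightarrow> complex"
    and t :: "nat \<Rightarrow> nat \<Rightarrow> complex"
  assumes "alg_emb emb" and "yangian_rel emb n T"
    and "1 \<le> m" and "m < n"
  shows "(\<forall>I. is_partition {m+1..n} I (\<xi> m) \<and> (\<forall>s\<in>{m+1..n-1}. etaI n I s \<le> \<xi> s) \<longrightarrow>
            SymG {m+1..n-1} \<xi> (\<lambda>s. emb (UI n m I s) * Lfun emb T n m x \<Lambda> \<xi> (etaI n I) s) t
            = emb (\<Prod>s\<in>{m+1..n-1}. 1 / of_nat (fact (etaI n I s))) *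
              SymG {m+1..n-1} \<xi> (\<lambda>s. emb (WI n m I s) * Lfun emb T n m x \<Lambda> \<xi> (etaI n I) s) t)
       \<and> (\<forall>J. is_partition {1..m} J (\<xi> m) \<and> (\<forall>s\<in>{1..m-1}. zetaJ J s \<le> \<xi> s) \<longrightarrow>
            SymG {1..m-1} \<xi> (\<lambda>s. emb (UJ m J (argJ m \<xi> (zetaJ J) s)) * Ltil emb T m x \<Lambda> \<xi> (zetaJ J) s) t
            = emb (\<Prod>s\<in>{1..m-1}. 1 / of_nat (fact (zetaJ J s))) *
              SymG {1..m-1} \<xi> (\<lambda>s. emb (WJ m J (argJ m \<xi> (zetaJ J) s)) * Ltil emb T m x \<Lambda> \<xi> (zetaJ J) s) t)"
  using SymG_UI_Lfun_eq_WI[OF assms(1)] SymG_UJ_Ltil_eq_WJ[OF assms(1)] by blast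

end
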